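(* For every finite-dimensional complex representation $V$ of $S_n$, \[ \mathrm{ch}\,\mathrm{Ind}\,V=\mathcal F(V)[H], \] where $H=\sum_{\mathbf x\in\mathbf N^n}t^{\mathbf x}=\sum_{k\ge0}h_k(t_1,\dots,t_n)$.
   Context: $S_n$ is regarded as the subgroup of permutation matrices in $\mathrm{GL}_n(\mathbf C)$. $M_n$ is the space of $n\times n$ complex matrices and $P^d(M_n)$ the homogeneous polynomials of degree $d$ in the entries of $Q\in M_n$. For a representation $(\rho,V)$ of $S_n$, $\mathrm{Ind}^dV=\{f\in P^d(M_n)\otimes V: f(wQ)=\rho(w)f(Q)\ \forall w\in S_n,Q\in M_n\}$ (elements viewed as $V$-valued polynomial functions on $M_n$), a polynomial representation of $\mathrm{GL}_n(\mathbf C)$ via $(\mathrm{Ind}^d\rho(g)f)(Q)=f(Qg)$. The character of a polynomial representation $\sigma$ of $\mathrm{GL}_n(\mathbf C)$ is $\mathrm{ch}\,\sigma(t_1,\dots,t_n)=\mathrm{trace}\,\sigma(\mathrm{diag}(t_1,\dots,t_n))$, and $\mathrm{ch}\,\mathrm{Ind}\,V:=\sum_{d\ge0}\mathrm{ch}\,\mathrm{Ind}^dV$, a symmetric formal power series in $t_1,\dots,t_n$. $\mathcal F(V)$ is the Frobenius characteristic of the character of $V$ (so $\mathcal F(V_\mu)=s_\mu$ for Specht modules). For $\mathbf x\in\mathbf N^n$, $t^{\mathbf x}=t_1^{x_1}\dotsb t_n^{x_n}$. Plethysm: if $g$ is a (possibly infinite) sum of monic monomials $t^{\mathbf x_1}+t^{\mathbf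 x_2}+\dotsb$ and $f$ a symmetric function, $f[g]=f(t^{\mathbf x_1},t^{\mathbf x_2},\dots)$. *)

theory Defs
  imports "HOL-Analysis.Analysis" "HOL-Combinatorics.Orbits"
begin

text \<open>The index type 'n stands for {1..n}; matrices in M_n are complex^'n^'n.
  A representation V of S_n of dimension m is modelled on complex^'m.\<close>

definition perm_mat :: "('n::finite \<Rightarrow> 'n) \<Rightarrow> complex^'n^'n" where
  "perm_mat \<sigma> = (\<chi> i j. if i = \<sigma> j then 1 else 0)"

definition diag_mat :: "complex^'n::finite \<Rightarrow> complex^'n^'n" where
  "diag_mat t = (\<chi> i j. if i = j then t $ i else 0)"

definition is_rep :: "(('n::finite \<Rightarrow> 'n) \<Rightarrow> complex^'m::finite^'m) \<Rightarrow> bool" where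
  "is_rep \<rho> \<longleftrightarrow> \<rho> id = mat 1 \<and>
     (\<forall>\<sigma> \<tau>. \<sigma> permutes UNIV \<and> \<tau> permutes UNIV \<longrightarrow> \<rho> (\<sigma> \<circ> \<tau>) = \<rho> \<sigma> ** \<rho> \<tau>)"

definition hom_poly :: "nat \<Rightarrow> (complex^'n::finite^'n \<Rightarrow> complex) \<Rightarrow> bool" where
  "hom_poly d p \<longleftrightarrow> (\<exists>c. p = (\<lambda>Q. \<Sum>e\<in>{e::'n \<Rightarrow> 'n \<Rightarrow> nat. (\<Sum>i\<in>UNIV. \<Sum>j\<in>UNIV. e i j) = d}.
       c e * (\<Prod>i\<in>UNIV. \<Prod>j\<in>UNIV. (Q $ i $ j) ^ e i j)))"

text \<open>P^d(M_n) tensor V, as V-valued polynomial functions.\<close>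
definition PdV :: "nat \<Rightarrow> (complex^'n::finite^'n \<Rightarrow> complex^'m::finite) set" where
  "PdV d = {f. \<forall>k. hom_poly d (\<lambda>Q. f Q $ k)}"

definition Ind :: "nat \<Rightarrow> (('n::finite \<Rightarrow> 'n) \<Rightarrow> complex^'m::finite^'m)
    \<Rightarrow> (complex^'n^'n \<Rightarrow> complex^'m) set" where
  "Ind d \<rho> = {f \<in> PdV d. \<forall>\<sigma> Q. \<sigma> permutes UNIV \<longrightarrow> f (perm_mat \<sigma> ** Q) = \<rho> \<sigma> *v f Q}"

definition Ind_act :: "complex^'n::finite^'n \<Rightarrow> (complex^'n^'n \<Rightarrow> complex^'m::finite)
    \<Rightarrow> (complex^'n^'n \<Rightarrow> complex^'m)" where
  "Ind_act g f = (\<lambda>Q. f (Q ** g))"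

definition lincomb :: "(nat \<Rightarrow> complex) \<Rightarrow> ('a \<Rightarrow> complex^'m::finite) list \<Rightarrow> 'a \<Rightarrow> complex^'m" where
  "lincomb c bs = (\<lambda>x. \<Sum>i<length bs. c i *s (bs ! i) x)"

definition is_basis_of :: "('a \<Rightarrow> complex^'m::finite) set \<Rightarrow> ('a \<Rightarrow> complex^'m) list \<Rightarrow> bool" where
  "is_basis_of W bs \<longleftrightarrow> set bs \<subseteq> W \<and>
     (\<forall>c. lincomb c bs = (\<lambda>x. 0) \<longrightarrow> (\<forall>i<length bs. c i = 0)) \<and>
     (\<forall>f\<in>W. \<exists>c. f = lincomb c bs)"

definition trace_on :: "('a \<Rightarrow> complex^'m::finite) set \<Rightarrow> (('a \<Rightarrow> complex^'m) \<Rightarrow> ('a \<Rightarrow> complex^'m)) \<Rightarrow> complex" where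
  "trace_on W T = (THE s. \<forall>bs M. is_basis_of W bs \<and>
      (\<forall>j<length bs. T (bs ! j) = lincomb (\<lambda>i. M i j) bs) \<longrightarrow> s = (\<Sum>j<length bs. M j j))"

definition ch_Ind :: "nat \<Rightarrow> (('n::finite \<Rightarrow> 'n) \<Rightarrow> complex^'m::finite^'m) \<Rightarrow> complex^'n \<Rightarrow> complex" where
  "ch_Ind d \<rho> t = trace_on (Ind d \<rho>) (Ind_act (diag_mat t))"

text \<open>Formal power series in t_1..t_n, as coefficient functions on exponent vectors N^n.
  Finite product of formal power series (Cauchy product).\<close>
type_synonym 'n mps = "('n \<Rightarrow> nat) \<Rightarrow> complex"

definition mps_prod :: "('c \<Rightarrow> 'n::finite mps) \<Rightarrow> 'c set \<Rightarrow> 'n mps" where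
  "mps_prod F C = (\<lambda>a. \<Sum>b\<in>{b. (\<forall>c. c \<notin> C \<longrightarrow> b c = (\<lambda>_. 0)) \<and> (\<lambda>i. \<Sum>c\<in>C. b c i) = a}.
       \<Prod>c\<in>C. F c (b c))"

text \<open>H = sum over x in N^n of t^x, as a list of monomials indexed by x.
  Plethysm of the power sum p_k with H: p_k[H] = sum over x of (t^x)^k = sum over x of t^(k x).\<close>
definition pk_H :: "nat \<Rightarrow> 'n::finite mps" where
  "pk_H k = (\<lambda>a. of_nat (card {x::'n \<Rightarrow> nat. (\<lambda>i. k * x i) = a}))"

text \<open>Character of V and the plethysm F(V)[H], using
  F(V) = (1/n!) sum over w of chi(w) p_(cycle type of w), with p_lambda = product of
  p_(length of cycle) over the cycles (orbits) of w.\<close>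
definition character :: "(('n::finite \<Rightarrow> 'n) \<Rightarrow> complex^'m::finite^'m) \<Rightarrow> ('n \<Rightarrow> 'n) \<Rightarrow> complex" where
  "character \<rho> \<sigma> = trace (\<rho> \<sigma>)"

definition cycles :: "('n \<Rightarrow> 'n) \<Rightarrow> 'n set set" where
  "cycles \<sigma> = {orbit \<sigma> x | x. True}"

definition p_cycle_type_H :: "('n::finite \<Rightarrow> 'n) \<Rightarrow> 'n mps" where
  "p_cycle_type_H \<sigma> = mps_prod (\<lambda>c. pk_H (card c)) (cycles \<sigma>)"

definition Frob_pleth_H :: "(('n::finite \<Rightarrow> 'n) \<Rightarrow> complex^'m::finite^'m) \<Rightarrow> 'n mps" where
  "Frob_pleth_H \<rho> = (\<lambda>a. (1 / of_nat (fact CARD('n))) *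
      (\<Sum>\<sigma>\<in>{\<sigma>. \<sigma> permutes (UNIV::'n set)}. character \<rho> \<sigma> * p_cycle_type_H \<sigma> a))"

end

theory Submission
  imports Defs "HOL-Computational_Algebra.Polynomial"
begin

text \<open>
  Ind^d V is the image of the Reynolds projection P f (Q) = (1/n!) \<Sum>_w \<rho>(w) f (w^-1 Q) on
  P^d(M_n) \<otimes> V, and P commutes with right multiplication by diag t. Hence ch Ind^d V is the
  trace of diag t \<circ> P on all of P^d(M_n) \<otimes> V, which is read off the basis Q^e \<otimes> v_k: its diagonal
  entry at (e, k) is (1/n!) \<Sum>_{w : e w = e} \<rho>(w)_kk t^col(e), where col(e) is the vector of column
  sums of the exponent matrix e and e w permutes its rows. Summing over k gives
  (1/n!) \<Sum>_w \<chi>(w) \<Sum>_{e w = e} t^col(e). A matrix with e w = e has equal rows along each cycle c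
  of w, so it amounts to a choice of x_c \<in> \<nat>^n per cycle contributing t^(|c| x_c); the inner sum
  is therefore \<Prod>_c p_|c|[H], and averaging against \<chi> gives F(V)[H].
\<close>

section \<open>Traces on spaces of vector-valued functions\<close>

definition lin_comb :: "('j \<Rightarrow> complex) \<Rightarrow> 'j set \<Rightarrow> ('j \<Rightarrow> 'a \<Rightarrow> complex^'m::finite) \<Rightarrow> 'a \<Rightarrow> complex^'m" where
  "lin_comb c J u = (\<lambda>x. \<Sum>j\<in>J. c j *s u j x)"

definition lin_indep :: "'j set \<Rightarrow> ('j \<Rightarrow> 'a \<Rightarrow> complex^'m::finite) \<Rightarrow> bool" where
  "lin_indep J u \<longleftrightarrow> (\<forall>c. lin_comb c J u = (\<lambda>_. 0) \<longrightarrow> (\<forall>j\<in>J. c j = 0))"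

lemma lin_comb_lin_comb:
  "lin_comb c R (\<lambda>k. lin_comb (\<lambda>j. D j k) J u) = lin_comb (\<lambda>j. \<Sum>k\<in>R. c k * D j k) J u"
proof -
  have "(\<Sum>k\<in>R. c k * (\<Sum>j\<in>J. D j k * u j x $ i)) = (\<Sum>j\<in>J. (\<Sum>k\<in>R. c k * D j k) * u j x $ i)" for x i
  proof -
    have "(\<Sum>k\<in>R. c k * (\<Sum>j\<in>J. D j k * u j x $ i)) = (\<Sum>k\<in>R. \<Sum>j\<in>J. c k * D j k * u j x $ i)"
      by (simp add: sum_distrib_left mult.assoc)
    also have "\<dots> = (\<Sum>j\<in>J. \<Sum>k\<in>R. c k * D j k * u j x $ i)" by (rule sum.swap)
    also have "\<dots> = (\<Sum>j\<in>J. (\<Sum>k\<in>R. c k * D j k) * u j x $ i)" by (simp add: sum_distrib_right)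
    finally show ?thesis .
  qed
  then show ?thesis unfolding lin_comb_def by (auto simp: vec_eq_iff)
qed

lemma lin_comb_cong: "(\<And>j. j \<in> J \<Longrightarrow> u j = u' j) \<Longrightarrow> lin_comb c J u = lin_comb c J u'"
  unfolding lin_comb_def by (auto intro!: ext sum.cong)

lemma lin_comb_indicator:
  assumes "finite R" "k \<in> R"
  shows "lin_comb (\<lambda>i. if i = k then 1 else 0) R w = w k"
  using assms unfolding lin_comb_def by (simp add: if_distrib[of "\<lambda>c. c *s _"] cong: if_cong)

lemma lin_indep_coeffs_eq:
  assumes "lin_indep J u" "lin_comb c J u = lin_comb c' J u" "j \<in> J"
  shows "c j = c' j"
proof -
  have "lin_comb (\<lambda>j. c j - c' j) J u = (\<lambda>_. 0)"
    using assms(2) unfolding lin_comb_def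
    by (auto simp: vec_eq_iff left_diff_distrib sum_subtractf fun_eq_iff)
  with assms(1,3) show ?thesis unfolding lin_indep_def by force
qed

lemma projection_coeffs_inverse:
  assumes "finite R" "lin_indep R ws"
    and D: "\<forall>k\<in>R. ws k = lin_comb (\<lambda>j. D j k) J us"
    and C: "\<forall>j\<in>J. P (us j) = lin_comb (\<lambda>k. C k j) R ws"
    and P_ws: "\<forall>k\<in>R. P (ws k) = ws k"
    and P_lin: "\<forall>c. P (lin_comb c J us) = lin_comb c J (\<lambda>j. P (us j))"
    and "i \<in> R" "k \<in> R"
  shows "(\<Sum>j\<in>J. C i j * D j k) = (if i = k then 1 else 0)"
proof -
  have "lin_comb (\<lambda>i. if i = k then 1 else 0) R ws = ws k"
    using assms by (intro lin_comb_indicator)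
  also have "\<dots> = P (lin_comb (\<lambda>j. D j k) J us)" using D P_ws \<open>k \<in> R\<close> by simp
  also have "\<dots> = lin_comb (\<lambda>j. D j k) J (\<lambda>j. lin_comb (\<lambda>i. C i j) R ws)"
    using P_lin C by (auto intro: lin_comb_cong)
  also have "\<dots> = lin_comb (\<lambda>i. \<Sum>j\<in>J. D j k * C i j) R ws" by (rule lin_comb_lin_comb)
  finally have "lin_comb (\<lambda>i. if i = k then 1 else 0) R ws = lin_comb (\<lambda>i. \<Sum>j\<in>J. D j k * C i j) R ws" .
  from lin_indep_coeffs_eq[OF \<open>lin_indep R ws\<close> this \<open>i \<in> R\<close>] show ?thesis
    by (simp add: mult.commute)
qed

text \<open>The matrix \<open>N\<close> of \<open>T \<circ> P\<close> in \<open>us\<close> factors as \<open>D M C\<close>, where \<open>M\<close> is the matrix of \<open>T\<close>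
  in \<open>ws\<close>; since \<open>C D = 1\<close>, cyclicity of the trace gives \<open>tr N = tr (M C D) = tr M\<close>.\<close>

lemma trace_comp_projection:
  assumes fin: "finite J" "finite R" and indep: "lin_indep J us" "lin_indep R ws"
    and D: "\<forall>k\<in>R. ws k = lin_comb (\<lambda>j. D j k) J us"
    and C: "\<forall>j\<in>J. P (us j) = lin_comb (\<lambda>k. C k j) R ws"
    and P_ws: "\<forall>k\<in>R. P (ws k) = ws k"
    and P_lin: "\<forall>c. P (lin_comb c J us) = lin_comb c J (\<lambda>j. P (us j))"
    and T_lin: "\<forall>c. T (lin_comb c R ws) = lin_comb c R (\<lambda>k. T (ws k))"
    and M: "\<forall>k\<in>R. T (ws k) = lin_comb (\<lambda>i. M i k) R ws"
    and N: "\<forall>j\<in>J. T (P (us j)) = lin_comb (\<lambda>l. N l j) J us"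
  shows "(\<Sum>j\<in>J. N j j) = (\<Sum>k\<in>R. M k k)"
proof -
  have N_eq: "N l j = (\<Sum>k\<in>R. (\<Sum>i\<in>R. C i j * M k i) * D l k)" if "j \<in> J" "l \<in> J" for l j
  proof -
    have "lin_comb (\<lambda>l. N l j) J us = T (lin_comb (\<lambda>k. C k j) R ws)" using N C that by simp
    also have "\<dots> = lin_comb (\<lambda>k. C k j) R (\<lambda>i. lin_comb (\<lambda>k. M k i) R ws)"
      using T_lin M by (auto intro: lin_comb_cong)
    also have "\<dots> = lin_comb (\<lambda>k. \<Sum>i\<in>R. C i j * M k i) R ws" by (rule lin_comb_lin_comb)
    also have "\<dots> = lin_comb (\<lambda>k. \<Sum>i\<in>R. C i j * M k i) R (\<lambda>k. lin_comb (\<lambda>l. D l k) J us)"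
      using D by (auto intro: lin_comb_cong)
    also have "\<dots> = lin_comb (\<lambda>l. \<Sum>k\<in>R. (\<Sum>i\<in>R. C i j * M k i) * D l k) J us"
      by (rule lin_comb_lin_comb)
    finally show ?thesis using lin_indep_coeffs_eq[OF indep(1) _ that(2)] by blast
  qed
  have "(\<Sum>j\<in>J. N j j) = (\<Sum>j\<in>J. \<Sum>k\<in>R. \<Sum>i\<in>R. M k i * (C i j * D j k))"
    using N_eq by (intro sum.cong refl) (simp add: sum_distrib_right sum_distrib_left ac_simps)
  also have "\<dots> = (\<Sum>k\<in>R. \<Sum>i\<in>R. M k i * (\<Sum>j\<in>J. C i j * D j k))"
  proof -
    have "(\<Sum>j\<in>J. \<Sum>k\<in>R. \<Sum>i\<in>R. M k i * (C i j * D j k))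
        = (\<Sum>k\<in>R. \<Sum>i\<in>R. \<Sum>j\<in>J. M k i * (C i j * D j k))"
      by (subst sum.swap) (simp add: sum.swap[of _ J])
    then show ?thesis by (simp add: sum_distrib_left)
  qed
  also have "\<dots> = (\<Sum>k\<in>R. \<Sum>i\<in>R. M k i * (if i = k then 1 else 0))"
    using projection_coeffs_inverse[OF fin(2) indep(2) D C P_ws P_lin]
    by (auto intro!: sum.cong)
  also have "\<dots> = (\<Sum>k\<in>R. M k k)" using fin by (simp add: if_distrib cong: if_cong)
  finally show ?thesis .
qed

lemma lincomb_eq_lin_comb: "lincomb c bs = lin_comb c {..<length bs} (\<lambda>i. bs ! i)"
  unfolding lincomb_def lin_comb_def by simp

lemma lincomb_Cons: "lincomb c (x # xs) = (\<lambda>Q. c 0 *s x Q + lincomb (\<lambda>i. c (Suc i)) xs Q)"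
  unfolding lincomb_def by (simp only: length_Cons sum.lessThan_Suc_shift) simp

lemma lincomb_scale_add:
  "lincomb (\<lambda>i. a * f i + g i) bs = (\<lambda>Q. a *s lincomb f bs Q + lincomb g bs Q)"
  unfolding lincomb_def
  by (simp add: vec_eq_iff fun_eq_iff sum.distrib sum_distrib_left distrib_right mult.assoc)

lemma lin_comb_distinct_list:
  assumes "distinct L" "set L = J"
  shows "lin_comb c J u = lincomb (\<lambda>i. c (L ! i)) (map u L)"
  unfolding lin_comb_def lincomb_def
  by (simp add: assms(2)[symmetric] sum.distinct_set_conv_list[OF assms(1)] sum_list_sum_nth
      atLeast0LessThan)

lemma lin_indep_Cons:
  assumes indep: "lin_indep {..<length bs} (\<lambda>i. bs ! i)"
    and not_span: "\<nexists>c. x = lincomb c bs"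
  shows "lin_indep {..<length (x # bs)} (\<lambda>i. (x # bs) ! i)"
  unfolding lin_indep_def
proof (intro allI impI ballI)
  fix c j assume "lin_comb c {..<length (x # bs)} (\<lambda>i. (x # bs) ! i) = (\<lambda>_. 0)"
    and j: "j \<in> {..<length (x # bs)}"
  then have zero: "c 0 *s x Q + lincomb (\<lambda>i. c (Suc i)) bs Q = 0" for Q
    by (metis lincomb_eq_lin_comb lincomb_Cons)
  have "c 0 = 0"
  proof (rule ccontr)
    assume "c 0 \<noteq> 0"
    have "lincomb (\<lambda>i. (- 1 / c 0) * c (Suc i) + 0) bs Q = x Q" for Q
    proof -
      have "lincomb (\<lambda>i. c (Suc i)) bs Q = - (c 0 *s x Q)" using zero[of Q] by (metis add_eq_0_iff)
      moreover have "lincomb (\<lambda>i. 0) bs Q = 0" by (simp add: lincomb_def)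
      ultimately show ?thesis
        using \<open>c 0 \<noteq> 0\<close> unfolding lincomb_scale_add by (simp add: vector_smult_assoc)
    qed
    then have "x = lincomb (\<lambda>i. (- 1 / c 0) * c (Suc i) + 0) bs" by auto
    with not_span show False by blast
  qed
  then have "lin_comb (\<lambda>i. c (Suc i)) {..<length bs} (\<lambda>i. bs ! i) = (\<lambda>_. 0)"
    using zero by (simp add: fun_eq_iff lincomb_eq_lin_comb)
  then show "c j = 0"
    using indep j \<open>c 0 = 0\<close> unfolding lin_indep_def by (cases j) auto
qed

lemma spanning_list_contains_basis:
  fixes ls :: "('a \<Rightarrow> complex^'m::finite) list"
  shows "\<exists>bs. set bs \<subseteq> set ls \<and> lin_indep {..<length bs} (\<lambda>i. bs ! i)
    \<and> (\<forall>c. \<exists>c'. lincomb c ls = lincomb c' bs)"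
proof (induction ls)
  case Nil
  show ?case by (rule exI[of _ "[]"]) (simp add: lin_indep_def lincomb_def)
next
  case (Cons x ls)
  then obtain bs where bs: "set bs \<subseteq> set ls" "lin_indep {..<length bs} (\<lambda>i. bs ! i)"
    "\<forall>c. \<exists>c'. lincomb c ls = lincomb c' bs" by blast
  have tail: "\<exists>c''. lincomb (\<lambda>i. c (Suc i)) ls = lincomb c'' bs" for c using bs(3) by blast
  show ?case
  proof (cases "\<exists>cx. x = lincomb cx bs")
    case True
    then obtain cx where cx: "x = lincomb cx bs" by blast
    have "\<exists>c'. lincomb c (x # ls) = lincomb c' bs" for c
    proof -
      obtain c'' where "lincomb (\<lambda>i. c (Suc i)) ls = lincomb c'' bs" using tail by blast
      then have "lincomb c (x # ls) = lincomb (\<lambda>i. c 0 * cx i + c'' i) bs"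
        unfolding lincomb_Cons lincomb_scale_add cx by simp
      then show ?thesis by blast
    qed
    then show ?thesis using bs(1,2) by (intro exI[of _ bs]) auto
  next
    case False
    have "\<exists>c'. lincomb c (x # ls) = lincomb c' (x # bs)" for c
    proof -
      obtain c'' where "lincomb (\<lambda>i. c (Suc i)) ls = lincomb c'' bs" using tail by blast
      then have "lincomb c (x # ls) = lincomb (case_nat (c 0) c'') (x # bs)"
        unfolding lincomb_Cons by simp
      then show ?thesis by blast
    qed
    then show ?thesis using bs(1) lin_indep_Cons[OF bs(2) False] by (intro exI[of _ "x # bs"]) auto
  qed
qed

lemma basis_matrix_exists:
  assumes "is_basis_of W bs" "\<forall>f\<in>W. T f \<in> W"
  shows "\<exists>M. \<forall>j<length bs. T (bs ! j) = lincomb (\<lambda>i. M i j) bs"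
proof -
  have "\<forall>j<length bs. \<exists>c. T (bs ! j) = lincomb c bs"
    using assms unfolding is_basis_of_def by (meson nth_mem subsetD)
  then obtain Mc where "\<forall>j<length bs. T (bs ! j) = lincomb (Mc j) bs" by (metis choice)
  then show ?thesis by (intro exI[of _ "\<lambda>i j. Mc j i"]) simp
qed

lemma trace_on_eqI:
  assumes "is_basis_of W bs" "\<forall>f\<in>W. T f \<in> W"
    and trace: "\<And>bs M. is_basis_of W bs \<Longrightarrow> \<forall>j<length bs. T (bs ! j) = lincomb (\<lambda>i. M i j) bs
      \<Longrightarrow> (\<Sum>j<length bs. M j j) = s"
  shows "trace_on W T = s"
  unfolding trace_on_def
proof (rule the_equality)
  fix s' assume s': "\<forall>bs M. is_basis_of W bs \<and> (\<forall>j<length bs. T (bs ! j) = lincomb (\<lambda>i. M i j) bs)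
    \<longrightarrow> s' = (\<Sum>j<length bs. M j j)"
  obtain M where M: "\<forall>j<length bs. T (bs ! j) = lincomb (\<lambda>i. M i j) bs"
    using basis_matrix_exists[OF assms(1,2)] by blast
  show "s' = s" using s'[rule_format, OF conjI[OF assms(1) M]] trace[OF assms(1) M] by simp
qed (use trace in auto)

lemma is_basis_of_projection:
  fixes us :: "'j \<Rightarrow> 'a \<Rightarrow> complex^'m::finite"
  assumes "finite J"
    and span: "\<forall>f\<in>W. \<exists>c. f = lin_comb c J us"
    and P_us: "\<forall>j\<in>J. P (us j) \<in> W"
    and P_id: "\<forall>f\<in>W. P f = f"
    and P_lin: "\<forall>c. P (lin_comb c J us) = lin_comb c J (\<lambda>j. P (us j))"
  shows "\<exists>bs. is_basis_of W bs"
proof -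
  obtain L where L: "set L = J" "distinct L" using finite_distinct_list[OF \<open>finite J\<close>] by blast
  obtain bs where bs: "set bs \<subseteq> set (map (\<lambda>j. P (us j)) L)" "lin_indep {..<length bs} (\<lambda>i. bs ! i)"
    "\<forall>c. \<exists>c'. lincomb c (map (\<lambda>j. P (us j)) L) = lincomb c' bs"
    using spanning_list_contains_basis by metis
  have "\<exists>c. f = lincomb c bs" if "f \<in> W" for f
  proof -
    from bspec[OF span that] obtain c where c: "f = lin_comb c J us" ..
    have "f = P f" using P_id that by simp
    also have "\<dots> = lin_comb c J (\<lambda>j. P (us j))" using c P_lin by simp
    also have "\<dots> = lincomb (\<lambda>i. c (L ! i)) (map (\<lambda>j. P (us j)) L)"
      by (rule lin_comb_distinct_list[OF L(2,1)])
    finally show ?thesis using bs(3) by metis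
  qed
  moreover have "set bs \<subseteq> W" using bs(1) P_us L(1) by fastforce
  ultimately have "is_basis_of W bs"
    using bs(2) unfolding is_basis_of_def lin_indep_def lincomb_eq_lin_comb by blast
  then show ?thesis ..
qed

lemma trace_on_projection:
  fixes us :: "'j \<Rightarrow> 'a \<Rightarrow> complex^'m::finite"
  assumes fin: "finite J" and indep: "lin_indep J us"
    and span: "\<forall>f\<in>W. \<exists>c. f = lin_comb c J us"
    and P_us: "\<forall>j\<in>J. P (us j) \<in> W"
    and P_id: "\<forall>f\<in>W. P f = f"
    and P_lin: "\<forall>c. P (lin_comb c J us) = lin_comb c J (\<lambda>j. P (us j))"
    and T_lin: "\<forall>c (R::nat set) ws. T (lin_comb c R ws) = lin_comb c R (\<lambda>k. T (ws k))"
    and T_W: "\<forall>f\<in>W. T f \<in> W"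
    and N: "\<forall>j\<in>J. T (P (us j)) = lin_comb (\<lambda>l. N l j) J us"
  shows "trace_on W T = (\<Sum>j\<in>J. N j j)"
proof -
  obtain bs where "is_basis_of W bs"
    using is_basis_of_projection[OF fin span P_us P_id P_lin] by blast
  then show ?thesis
  proof (rule trace_on_eqI[OF _ T_W])
    fix ws M assume ws: "is_basis_of W ws"
      and M: "\<forall>j<length ws. T (ws ! j) = lincomb (\<lambda>i. M i j) ws"
    let ?R = "{..<length ws}"
    have ws_W: "\<forall>k\<in>?R. ws ! k \<in> W" using ws unfolding is_basis_of_def by auto
    then have "\<forall>k\<in>?R. \<exists>c. ws ! k = lin_comb c J us" using span by blast
    then obtain D where D: "\<forall>k\<in>?R. ws ! k = lin_comb (D k) J us" by (metis bchoice)
    have "\<forall>j\<in>J. \<exists>c. P (us j) = lincomb c ws" using P_us ws unfolding is_basis_of_def by blast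
    then obtain C where C: "\<forall>j\<in>J. P (us j) = lincomb (C j) ws" by (metis bchoice)
    have "(\<Sum>j\<in>J. N j j) = (\<Sum>k\<in>?R. M k k)"
    proof (rule trace_comp_projection[where P=P and T=T and ws="\<lambda>k. ws ! k"
          and D="\<lambda>j k. D k j" and C="\<lambda>k j. C j k" and M=M and N=N])
      show "lin_indep ?R (\<lambda>k. ws ! k)"
        using ws unfolding is_basis_of_def lin_indep_def lincomb_eq_lin_comb by simp
      show "\<forall>j\<in>J. P (us j) = lin_comb (\<lambda>k. C j k) ?R (\<lambda>k. ws ! k)"
        using C by (simp add: lincomb_eq_lin_comb)
      show "\<forall>k\<in>?R. T (ws ! k) = lin_comb (\<lambda>i. M i k) ?R (\<lambda>k. ws ! k)"
        using M by (simp add: lincomb_eq_lin_comb)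
      show "\<forall>k\<in>?R. P (ws ! k) = ws ! k" using ws_W P_id by blast
      show "\<forall>k\<in>?R. ws ! k = lin_comb (\<lambda>j. D k j) J us" using D by simp
      show "\<forall>c. T (lin_comb c ?R (\<lambda>k. ws ! k)) = lin_comb c ?R (\<lambda>k. T (ws ! k))" using T_lin by blast
    qed (use fin indep P_lin N in simp_all)
    then show "(\<Sum>j<length ws. M j j) = (\<Sum>j\<in>J. N j j)" by simp
  qed
qed

section \<open>Linear independence of monomial functions\<close>

lemma poly_fun_eq_0_coeff:
  fixes a :: "nat \<Rightarrow> complex"
  assumes "finite K" "\<forall>z. (\<Sum>k\<in>K. a k * z ^ k) = 0" "k \<in> K"
  shows "a k = 0"
proof -
  define p where "p = (\<Sum>k\<in>K. monom (a k) k)"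
  have "\<forall>z. poly p z = 0" using assms(2) unfolding p_def by (simp add: poly_sum poly_monom)
  then have "p = 0" using poly_all_0_iff_0 by blast
  moreover have "coeff p k = a k"
    unfolding p_def coeff_sum using assms(1,3) by (simp add: if_distrib cong: if_cong)
  ultimately show ?thesis by simp
qed

text \<open>Collecting the terms of a polynomial by the exponent of one variable \<open>v\<close>: each slice
  is the coefficient of a univariate polynomial in \<open>x v\<close>.\<close>

lemma mpoly_fun_slice_eq_0:
  fixes c :: "('v \<Rightarrow> nat) \<Rightarrow> complex"
  assumes "finite S" "finite E" "v \<notin> S" "k \<in> (\<lambda>e. e v) ` E"
    and zero: "\<forall>x. (\<Sum>e\<in>E. c e * (\<Prod>u\<in>insert v S. x u ^ e u)) = 0"
  shows "(\<Sum>e\<in>{e\<in>E. e v = k}. c e * (\<Prod>u\<in>S. x u ^ e u)) = 0"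
proof -
  let ?g = "\<lambda>k. \<Sum>e\<in>{e\<in>E. e v = k}. c e * (\<Prod>u\<in>S. x u ^ e u)"
  have "(\<Sum>k\<in>(\<lambda>e. e v) ` E. ?g k * z ^ k) = 0" for z
  proof -
    have prod_eq: "(\<Prod>u\<in>insert v S. (x(v:=z)) u ^ e u) = z ^ e v * (\<Prod>u\<in>S. x u ^ e u)" for e
    proof -
      have "(\<Prod>u\<in>S. (x(v:=z)) u ^ e u) = (\<Prod>u\<in>S. x u ^ e u)"
        using \<open>v \<notin> S\<close> by (intro prod.cong) auto
      then show ?thesis using \<open>finite S\<close> \<open>v \<notin> S\<close> by simp
    qed
    have "?g k * z ^ k = (\<Sum>e\<in>{e\<in>E. e v = k}. c e * (\<Prod>u\<in>insert v S. (x(v:=z)) u ^ e u))" for k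
      unfolding sum_distrib_right prod_eq by (intro sum.cong refl) (simp add: mult_ac)
    then have "(\<Sum>k\<in>(\<lambda>e. e v) ` E. ?g k * z ^ k)
        = (\<Sum>k\<in>(\<lambda>e. e v) ` E. \<Sum>e\<in>{e\<in>E. e v = k}. c e * (\<Prod>u\<in>insert v S. (x(v:=z)) u ^ e u))"
      by simp
    also have "\<dots> = (\<Sum>e\<in>E. c e * (\<Prod>u\<in>insert v S. (x(v:=z)) u ^ e u))"
      by (rule sum.image_gen[symmetric]) (rule \<open>finite E\<close>)
    also have "\<dots> = 0" using zero by blast
    finally show ?thesis .
  qed
  then show ?thesis using poly_fun_eq_0_coeff[of "(\<lambda>e. e v) ` E" ?g k] assms(2,4) by blast
qed

lemma sum_reindex_drop_var:
  fixes c :: "('v \<Rightarrow> nat) \<Rightarrow> complex"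
  assumes "v \<notin> S"
  shows "(\<Sum>f\<in>(\<lambda>e. e(v := 0)) ` {e\<in>E. e v = k}. c (f(v := k)) * (\<Prod>u\<in>S. x u ^ f u))
    = (\<Sum>e\<in>{e\<in>E. e v = k}. c e * (\<Prod>u\<in>S. x u ^ e u))"
proof -
  have "inj_on (\<lambda>e. e(v := 0)) {e\<in>E. e v = k}"
    by (rule inj_onI) (auto simp: fun_eq_iff split: if_splits, metis)
  moreover have "(\<Prod>u\<in>S. x u ^ (e(v := 0)) u) = (\<Prod>u\<in>S. x u ^ e u)" for e
    using assms by (intro prod.cong) auto
  ultimately show ?thesis by (simp add: sum.reindex) (intro sum.cong refl, auto)
qed

lemma mpoly_fun_eq_0_coeff:
  fixes c :: "('v \<Rightarrow> nat) \<Rightarrow> complex"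
  assumes "finite S" "finite E" "\<forall>e\<in>E. \<forall>v. v \<notin> S \<longrightarrow> e v = 0"
    and "\<forall>x. (\<Sum>e\<in>E. c e * (\<Prod>v\<in>S. x v ^ e v)) = 0" "e \<in> E"
  shows "c e = 0"
  using assms
proof (induction S arbitrary: E c e rule: finite_induct)
  case empty
  then have "E = {e}" by (auto simp: fun_eq_iff) metis
  then show ?case using empty(3) by simp
next
  case (insert v S)
  let ?E' = "(\<lambda>e'. e'(v := 0)) ` {e'\<in>E. e' v = e v}"
  have "(\<lambda>f. c (f(v := e v))) (e(v := 0)) = 0"
  proof (rule insert.IH[of ?E' "\<lambda>f. c (f(v := e v))" "e(v := 0)"])
    show "\<forall>x. (\<Sum>f\<in>?E'. c (f(v := e v)) * (\<Prod>u\<in>S. x u ^ f u)) = 0"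
      unfolding sum_reindex_drop_var[OF insert.hyps(2)]
      using insert.prems(1,3,4) insert.hyps by (intro allI mpoly_fun_slice_eq_0) auto
    show "e(v := 0) \<in> ?E'" using insert.prems(4) by blast
  qed (use insert.prems in auto)
  then show ?case by simp
qed

lemma finite_funs_into:
  assumes "finite B"
  shows "finite {f::'a::finite \<Rightarrow> 'b. \<forall>x. f x \<in> B}"
  using finite_set_of_finite_funs[of "UNIV::'a set" B] assms by simp

section \<open>The monomial basis of \<open>P\<^sup>d(M\<^sub>n) \<otimes> V\<close>\<close>

definition mat_monom :: "('n::finite \<Rightarrow> 'n \<Rightarrow> nat) \<Rightarrow> complex^'n^'n \<Rightarrow> complex" where
  "mat_monom e Q = (\<Prod>i\<in>UNIV. \<Prod>j\<in>UNIV. (Q $ i $ j) ^ e i j)"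

definition mat_exps :: "nat \<Rightarrow> ('n::finite \<Rightarrow> 'n \<Rightarrow> nat) set" where
  "mat_exps d = {e. (\<Sum>i\<in>UNIV. \<Sum>j\<in>UNIV. e i j) = d}"

definition monom_basis :: "('n::finite \<Rightarrow> 'n \<Rightarrow> nat) \<times> 'm::finite \<Rightarrow> complex^'n^'n \<Rightarrow> complex^'m" where
  "monom_basis p Q = (\<chi> l. if l = snd p then mat_monom (fst p) Q else 0)"

lemma finite_mat_exps: "finite (mat_exps d :: ('n::finite \<Rightarrow> 'n \<Rightarrow> nat) set)"
proof -
  have "e i j \<le> (\<Sum>i\<in>UNIV. \<Sum>j\<in>UNIV. e i j)" for e :: "'n \<Rightarrow> 'n \<Rightarrow> nat" and i j
    using member_le_sum[of j UNIV "e i"] member_le_sum[of i UNIV "\<lambda>i. \<Sum>j\<in>UNIV. e i j"] by simp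
  then have "mat_exps d \<subseteq> {e::'n \<Rightarrow> 'n \<Rightarrow> nat. \<forall>i. e i \<in> {f. \<forall>j. f j \<in> {..d}}}"
    by (auto simp: mat_exps_def)
  moreover have "finite {e::'n \<Rightarrow> 'n \<Rightarrow> nat. \<forall>i. e i \<in> {f. \<forall>j. f j \<in> {..d}}}"
    by (intro finite_funs_into) simp
  ultimately show ?thesis by (rule finite_subset)
qed

lemma lin_comb_monom_basis_nth:
  "lin_comb c (mat_exps d \<times> UNIV) monom_basis Q $ l = (\<Sum>e\<in>mat_exps d. c (e, l) * mat_monom e Q)"
proof -
  have "lin_comb c (mat_exps d \<times> UNIV) monom_basis Q $ l
      = (\<Sum>p\<in>mat_exps d \<times> UNIV. c p * (if l = snd p then mat_monom (fst p) Q else 0))"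
    unfolding lin_comb_def monom_basis_def by simp
  also have "\<dots> = (\<Sum>e\<in>mat_exps d. \<Sum>k\<in>UNIV. c (e, k) * (if l = k then mat_monom e Q else 0))"
    by (simp add: sum.cartesian_product case_prod_unfold)
  also have "\<dots> = (\<Sum>e\<in>mat_exps d. c (e, l) * mat_monom e Q)"
    by (simp add: if_distrib[of "(*) _"] cong: if_cong)
  finally show ?thesis .
qed

lemma hom_poly_iff_mat_monom:
  "hom_poly d p \<longleftrightarrow> (\<exists>c. p = (\<lambda>Q. \<Sum>e\<in>mat_exps d. c e * mat_monom e Q))"
  by (simp add: hom_poly_def mat_exps_def mat_monom_def)

lemma lin_comb_monom_basis_in_PdV:
  "lin_comb c (mat_exps d \<times> UNIV) (monom_basis :: _ \<Rightarrow> _ \<Rightarrow> complex^'m::finite) \<in> PdV d"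
  unfolding PdV_def hom_poly_iff_mat_monom mem_Collect_eq lin_comb_monom_basis_nth
  by (intro allI, rule_tac x="\<lambda>e. c (e, k)" in exI, rule refl)

lemma PdV_in_span_monom_basis:
  assumes "(f :: complex^'n::finite^'n \<Rightarrow> complex^'m::finite) \<in> PdV d"
  shows "\<exists>c. f = lin_comb c (mat_exps d \<times> UNIV) monom_basis"
proof -
  have "\<forall>k. \<exists>c. (\<lambda>Q. f Q $ k) = (\<lambda>Q. \<Sum>e\<in>mat_exps d. c e * mat_monom e Q)"
    using assms unfolding PdV_def hom_poly_iff_mat_monom by blast
  then obtain c where c: "\<forall>k. (\<lambda>Q. f Q $ k) = (\<lambda>Q. \<Sum>e\<in>mat_exps d. c k e * mat_monom e Q)"
    by metis
  have "f = lin_comb (\<lambda>(e, k). c k e) (mat_exps d \<times> UNIV) monom_basis"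
    by (auto simp: fun_eq_iff vec_eq_iff lin_comb_monom_basis_nth c[rule_format, THEN fun_cong])
  then show ?thesis by blast
qed

lemma mat_monom_eq_prod_entries:
  "mat_monom e (\<chi> i j. x (i, j)) = (\<Prod>v\<in>UNIV. x v ^ case_prod e v)"
proof -
  have "mat_monom e (\<chi> i j. x (i, j)) = (\<Prod>(i, j)\<in>UNIV \<times> UNIV. x (i, j) ^ e i j)"
    unfolding mat_monom_def by (simp add: prod.cartesian_product)
  then show ?thesis by (simp add: case_prod_unfold)
qed

lemma lin_indep_monom_basis:
  "lin_indep (mat_exps d \<times> UNIV) (monom_basis :: _ \<Rightarrow> complex^'n::finite^'n \<Rightarrow> complex^'m::finite)"
  unfolding lin_indep_def
proof (intro allI impI ballI)
  fix c p
  assume zero: "lin_comb c (mat_exps d \<times> UNIV)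
      (monom_basis :: _ \<Rightarrow> complex^'n^'n \<Rightarrow> complex^'m) = (\<lambda>_. 0)"
    and p: "p \<in> (mat_exps d :: ('n \<Rightarrow> 'n \<Rightarrow> nat) set) \<times> (UNIV::'m set)"
  obtain e l where p_eq: "p = (e, l)" by (cases p)
  have inj: "inj_on (\<lambda>e::'n \<Rightarrow> 'n \<Rightarrow> nat. case_prod e) (mat_exps d)"
    by (rule inj_onI) (metis curry_case_prod)
  have "(\<lambda>f. c (curry f, l)) (case_prod e) = 0"
  proof (rule mpoly_fun_eq_0_coeff[where S=UNIV and E="case_prod ` mat_exps d"])
    show "\<forall>x. (\<Sum>f\<in>case_prod ` mat_exps d. c (curry f, l) * (\<Prod>v\<in>UNIV. x v ^ f v)) = 0"
    proof
      fix x :: "'n \<times> 'n \<Rightarrow> complex"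
      have "(\<Sum>f\<in>case_prod ` mat_exps d. c (curry f, l) * (\<Prod>v\<in>UNIV. x v ^ f v))
          = (\<Sum>e\<in>mat_exps d. c (e, l) * mat_monom e (\<chi> i j. x (i, j)))"
        by (simp add: sum.reindex[OF inj] mat_monom_eq_prod_entries)
      also have "\<dots> = 0"
        using fun_cong[OF zero, of "\<chi> i j. x (i, j)"] by (simp add: vec_eq_iff lin_comb_monom_basis_nth)
      finally show "(\<Sum>f\<in>case_prod ` mat_exps d. c (curry f, l) * (\<Prod>v\<in>UNIV. x v ^ f v)) = 0" .
    qed
  qed (use finite_mat_exps p p_eq in auto)
  then show "c p = 0" using p_eq by simp
qed

lemma perm_mat_mult_nth:
  assumes "\<sigma> permutes (UNIV::'n::finite set)"
  shows "(perm_mat \<sigma> ** Q) $ i $ j = Q $ inv \<sigma> i $ j"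
proof -
  have "(i = \<sigma> k) = (k = inv \<sigma> i)" for k using permutes_inv_eq[OF assms, of i k] by auto
  then show ?thesis
    by (simp add: matrix_matrix_mult_def perm_mat_def if_distrib[of "\<lambda>x. x * _"]
        permutes_inverses[OF assms] cong: if_cong)
qed

lemma mult_diag_mat_nth: "(Q ** diag_mat t) $ i $ j = Q $ i $ j * t $ j"
  by (simp add: matrix_matrix_mult_def diag_mat_def if_distrib[of "(*) _"] cong: if_cong)

lemma mat_monom_perm_mat:
  assumes "\<sigma> permutes (UNIV::'n::finite set)"
  shows "mat_monom e (perm_mat (inv \<sigma>) ** Q) = mat_monom (e \<circ> inv \<sigma>) Q"
proof -
  have "mat_monom e (perm_mat (inv \<sigma>) ** Q) = (\<Prod>i\<in>UNIV. \<Prod>j\<in>UNIV. (Q $ \<sigma> i $ j) ^ e i j)"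
    unfolding mat_monom_def perm_mat_mult_nth[OF permutes_inv[OF assms]] permutes_inv_inv[OF assms] ..
  also have "\<dots> = (\<Prod>i\<in>UNIV. \<Prod>j\<in>UNIV. (Q $ i $ j) ^ e (inv \<sigma> i) j)"
    using prod.permute[OF assms, of "\<lambda>i. \<Prod>j\<in>UNIV. (Q $ i $ j) ^ e (inv \<sigma> i) j"]
    by (simp add: permutes_inverses[OF assms])
  finally show ?thesis unfolding mat_monom_def by simp
qed

definition col_sums :: "('n::finite \<Rightarrow> 'n \<Rightarrow> nat) \<Rightarrow> 'n \<Rightarrow> nat" where
  "col_sums e = (\<lambda>j. \<Sum>i\<in>UNIV. e i j)"

definition vec_monom :: "complex^'n::finite \<Rightarrow> ('n \<Rightarrow> nat) \<Rightarrow> complex" where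
  "vec_monom t a = (\<Prod>i\<in>UNIV. (t $ i) ^ a i)"

lemma mat_monom_mult_diag_mat:
  "mat_monom e (Q ** diag_mat t) = vec_monom t (col_sums e) * mat_monom e Q"
proof -
  have "mat_monom e (Q ** diag_mat t) = mat_monom e Q * (\<Prod>i\<in>UNIV. \<Prod>j\<in>UNIV. (t $ j) ^ e i j)"
    unfolding mat_monom_def mult_diag_mat_nth by (simp add: power_mult_distrib prod.distrib)
  also have "(\<Prod>i\<in>UNIV. \<Prod>j\<in>UNIV. (t $ j) ^ e i j) = vec_monom t (col_sums e)"
    unfolding vec_monom_def col_sums_def by (subst prod.swap) (simp add: power_sum)
  finally show ?thesis by simp
qed

lemma comp_inv_in_mat_exps:
  assumes "\<sigma> permutes (UNIV::'n::finite set)" "e \<in> mat_exps d"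
  shows "e \<circ> inv \<sigma> \<in> mat_exps d"
  using assms sum.permute[OF permutes_inv[OF assms(1)], of "\<lambda>i. \<Sum>j\<in>UNIV. e i j"]
  by (simp add: mat_exps_def comp_def)

section \<open>The Reynolds projection onto \<open>Ind\<^sup>d V\<close>\<close>

definition reynolds :: "(('n::finite \<Rightarrow> 'n) \<Rightarrow> complex^'m::finite^'m)
    \<Rightarrow> (complex^'n^'n \<Rightarrow> complex^'m) \<Rightarrow> complex^'n^'n \<Rightarrow> complex^'m" where
  "reynolds \<rho> f = (\<lambda>Q. (1 / of_nat (fact CARD('n))) *s
      (\<Sum>\<sigma> | \<sigma> permutes UNIV. \<rho> \<sigma> *v f (perm_mat (inv \<sigma>) ** Q)))"

lemma reynolds_lin_comb: "reynolds \<rho> (lin_comb c J u) = lin_comb c J (\<lambda>j. reynolds \<rho> (u j))"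
proof (rule ext)
  fix Q
  let ?S = "{\<sigma>. \<sigma> permutes (UNIV::'a set)}"
  have "reynolds \<rho> (lin_comb c J u) Q = (1 / of_nat (fact CARD('a))) *s
      (\<Sum>j\<in>J. \<Sum>\<sigma>\<in>?S. c j *s (\<rho> \<sigma> *v u j (perm_mat (inv \<sigma>) ** Q)))"
    unfolding reynolds_def lin_comb_def by (simp add: vec.sum vec.scale sum.swap[of _ ?S])
  then show "reynolds \<rho> (lin_comb c J u) Q = lin_comb c J (\<lambda>j. reynolds \<rho> (u j)) Q"
    unfolding reynolds_def lin_comb_def by (simp add: vec_eq_iff sum_distrib_left mult_ac)
qed

lemma is_rep_inv:
  assumes "is_rep \<rho>" "\<sigma> permutes UNIV"
  shows "\<rho> \<sigma> ** \<rho> (inv \<sigma>) = mat 1"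
  using assms permutes_inv[OF assms(2)] permutes_inv_o(1)[OF assms(2)] unfolding is_rep_def by metis

lemma reynolds_perm_mat_mult:
  assumes rep: "is_rep \<rho>" and \<tau>: "\<tau> permutes (UNIV::'n::finite set)"
  shows "reynolds \<rho> f (perm_mat \<tau> ** Q) = \<rho> \<tau> *v reynolds \<rho> f Q"
proof -
  have shift: "\<rho> (\<tau> \<circ> \<sigma>) *v f (perm_mat (inv (\<tau> \<circ> \<sigma>)) ** (perm_mat \<tau> ** Q))
      = \<rho> \<tau> *v (\<rho> \<sigma> *v f (perm_mat (inv \<sigma>) ** Q))" if \<sigma>: "\<sigma> permutes UNIV" for \<sigma>
  proof -
    have \<tau>\<sigma>: "\<tau> \<circ> \<sigma> permutes UNIV" using permutes_compose[OF \<sigma> \<tau>] .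
    have "perm_mat (inv (\<tau> \<circ> \<sigma>)) ** (perm_mat \<tau> ** Q) = perm_mat (inv \<sigma>) ** Q"
      by (simp add: vec_eq_iff perm_mat_mult_nth permutes_inv \<sigma> \<tau> \<tau>\<sigma> permutes_inv_inv[OF \<sigma>]
          permutes_inv_inv[OF \<tau>\<sigma>] permutes_inverses[OF \<tau>])
    moreover have "\<rho> (\<tau> \<circ> \<sigma>) = \<rho> \<tau> ** \<rho> \<sigma>" using rep \<sigma> \<tau> unfolding is_rep_def by blast
    ultimately show ?thesis by (simp add: matrix_vector_mul_assoc)
  qed
  have "(\<Sum>\<sigma> | \<sigma> permutes UNIV. \<rho> \<sigma> *v f (perm_mat (inv \<sigma>) ** (perm_mat \<tau> ** Q)))
      = (\<Sum>\<sigma> | \<sigma> permutes UNIV. \<rho> (\<tau> \<circ> \<sigma>) *v f (perm_mat (inv (\<tau> \<circ> \<sigma>)) ** (perm_mat \<tau> ** Q)))"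
    by (rule setum_permutations_compose_left[OF \<tau>])
  also have "\<dots> = \<rho> \<tau> *v (\<Sum>\<sigma> | \<sigma> permutes UNIV. \<rho> \<sigma> *v f (perm_mat (inv \<sigma>) ** Q))"
    by (simp add: shift vec.sum)
  finally show ?thesis unfolding reynolds_def by (simp add: vec.scale)
qed

lemma reynolds_Ind:
  assumes rep: "is_rep \<rho>" and f: "f \<in> Ind d \<rho>"
  shows "reynolds \<rho> f = (f :: complex^'n::finite^'n \<Rightarrow> complex^'m::finite)"
proof (rule ext)
  fix Q
  have "\<rho> \<sigma> *v f (perm_mat (inv \<sigma>) ** Q) = f Q" if "\<sigma> permutes UNIV" for \<sigma>
    using f permutes_inv[OF that] is_rep_inv[OF rep that]
    by (simp add: Ind_def matrix_vector_mul_assoc)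
  then have "reynolds \<rho> f Q = (1 / of_nat (fact CARD('n))) *s (of_nat (fact CARD('n)) *s f Q)"
    by (simp add: reynolds_def card_permutations scaleR_conv_of_real vec_eq_iff)
  then show "reynolds \<rho> f Q = f Q" by (simp add: vector_smult_assoc)
qed

definition reynolds_coeff :: "(('n::finite \<Rightarrow> 'n) \<Rightarrow> complex^'m::finite^'m)
    \<Rightarrow> ('n \<Rightarrow> 'n \<Rightarrow> nat) \<times> 'm \<Rightarrow> ('n \<Rightarrow> 'n \<Rightarrow> nat) \<times> 'm \<Rightarrow> complex" where
  "reynolds_coeff \<rho> p q = (1 / of_nat (fact CARD('n))) *
     (\<Sum>\<sigma> | \<sigma> permutes UNIV. if fst p \<circ> \<sigma> = fst q then \<rho> \<sigma> $ snd p $ snd q else 0)"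

lemma comp_eq_iff_eq_comp_inv:
  assumes "\<sigma> permutes UNIV"
  shows "f \<circ> \<sigma> = g \<longleftrightarrow> f = g \<circ> inv \<sigma>"
  by (metis assms comp_assoc comp_id permutes_inv_o(1,2))

lemma reynolds_monom_basis:
  assumes e: "e \<in> mat_exps d"
  shows "reynolds \<rho> (monom_basis (e, k)) = lin_comb (\<lambda>p. reynolds_coeff \<rho> p (e, k)) (mat_exps d \<times> UNIV)
    (monom_basis :: _ \<Rightarrow> complex^'n::finite^'n \<Rightarrow> complex^'m::finite)"
proof (intro ext iffD2[OF vec_eq_iff] allI)
  fix Q :: "complex^'n^'n" and l :: 'm
  have "(\<rho> \<sigma> *v monom_basis (e, k) (perm_mat (inv \<sigma>) ** Q)) $ l
      = (\<Sum>e'\<in>mat_exps d. if e' = e \<circ> inv \<sigma> then \<rho> \<sigma> $ l $ k * mat_monom e' Q else 0)"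
    if \<sigma>: "\<sigma> permutes UNIV" for \<sigma>
    using comp_inv_in_mat_exps[OF \<sigma> e]
    by (simp add: matrix_vector_mult_def monom_basis_def mat_monom_perm_mat[OF \<sigma>] finite_mat_exps
        if_distrib[of "(*) _"] cong: if_cong)
  then have "reynolds \<rho> (monom_basis (e, k)) Q $ l = (1 / of_nat (fact CARD('n))) *
      (\<Sum>e'\<in>mat_exps d. \<Sum>\<sigma> | \<sigma> permutes UNIV.
        if e' = e \<circ> inv \<sigma> then \<rho> \<sigma> $ l $ k * mat_monom e' Q else 0)"
    by (simp add: reynolds_def sum.swap[of _ "{\<sigma>. \<sigma> permutes UNIV}"])
  also have "\<dots> = (\<Sum>e'\<in>mat_exps d. reynolds_coeff \<rho> (e', l) (e, k) * mat_monom e' Q)"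
    unfolding reynolds_coeff_def sum_distrib_left sum_distrib_right
    by (intro sum.cong refl) (simp add: comp_eq_iff_eq_comp_inv if_distrib[of "\<lambda>x. x * _"])
  finally show "reynolds \<rho> (monom_basis (e, k)) Q $ l = lin_comb (\<lambda>p. reynolds_coeff \<rho> p (e, k))
      (mat_exps d \<times> UNIV) monom_basis Q $ l"
    by (simp add: lin_comb_monom_basis_nth)
qed

lemma Ind_act_lin_comb: "Ind_act g (lin_comb c J u) = lin_comb c J (\<lambda>j. Ind_act g (u j))"
  unfolding Ind_act_def lin_comb_def by simp

lemma Ind_act_diag_mat_lin_comb_monom_basis:
  "Ind_act (diag_mat t) (lin_comb c J monom_basis)
    = lin_comb (\<lambda>p. c p * vec_monom t (col_sums (fst p))) J monom_basis"
  by (simp add: Ind_act_def lin_comb_def monom_basis_def mat_monom_mult_diag_mat vec_eq_iff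
      fun_eq_iff if_distrib[of "(*) _"] mult_ac cong: if_cong)

lemma Ind_act_diag_mat_in_Ind:
  assumes f: "f \<in> Ind d \<rho>"
  shows "Ind_act (diag_mat t) f \<in> Ind d \<rho>"
proof -
  obtain c where c: "f = lin_comb c (mat_exps d \<times> UNIV) monom_basis"
    using f PdV_in_span_monom_basis unfolding Ind_def by blast
  have "Ind_act (diag_mat t) f \<in> PdV d"
    unfolding c Ind_act_diag_mat_lin_comb_monom_basis by (rule lin_comb_monom_basis_in_PdV)
  moreover have "Ind_act (diag_mat t) f (perm_mat \<sigma> ** Q) = \<rho> \<sigma> *v Ind_act (diag_mat t) f Q"
    if "\<sigma> permutes UNIV" for \<sigma> Q
    using f that unfolding Ind_def Ind_act_def by (simp add: matrix_mul_assoc[symmetric])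
  ultimately show ?thesis unfolding Ind_def by blast
qed

lemma ch_Ind_eq_sum_reynolds_coeff:
  assumes rep: "is_rep \<rho>"
  shows "ch_Ind d \<rho> t
    = (\<Sum>p\<in>mat_exps d \<times> UNIV. reynolds_coeff \<rho> p p * vec_monom t (col_sums (fst p)))"
  unfolding ch_Ind_def
proof (rule trace_on_projection[where us=monom_basis and P="reynolds \<rho>"
      and N="\<lambda>l j. reynolds_coeff \<rho> l j * vec_monom t (col_sums (fst l))"])
  show "finite (mat_exps d \<times> (UNIV::'b set))" by (simp add: finite_mat_exps)
  show "\<forall>j\<in>mat_exps d \<times> UNIV. reynolds \<rho> (monom_basis j) \<in> Ind d \<rho>"
  proof
    fix j assume "j \<in> (mat_exps d :: ('a \<Rightarrow> 'a \<Rightarrow> nat) set) \<times> (UNIV :: 'b set)"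
    then obtain e k where "j = (e, k)" "e \<in> mat_exps d" by auto
    then have "reynolds \<rho> (monom_basis j) \<in> PdV d"
      by (simp add: reynolds_monom_basis lin_comb_monom_basis_in_PdV)
    then show "reynolds \<rho> (monom_basis j) \<in> Ind d \<rho>"
      unfolding Ind_def using reynolds_perm_mat_mult[OF rep] by blast
  qed
  show "\<forall>j\<in>mat_exps d \<times> UNIV. Ind_act (diag_mat t) (reynolds \<rho> (monom_basis j))
      = lin_comb (\<lambda>l. reynolds_coeff \<rho> l j * vec_monom t (col_sums (fst l))) (mat_exps d \<times> UNIV)
          monom_basis"
    by (auto simp: reynolds_monom_basis Ind_act_diag_mat_lin_comb_monom_basis)
  show "\<forall>f\<in>Ind d \<rho>. \<exists>c. f = lin_comb c (mat_exps d \<times> UNIV) monom_basis"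
    using PdV_in_span_monom_basis unfolding Ind_def by blast
qed (simp_all add: lin_indep_monom_basis reynolds_Ind[OF rep] reynolds_lin_comb Ind_act_lin_comb
    Ind_act_diag_mat_in_Ind)

lemma ch_Ind_eq_sum_invariant_exps:
  assumes rep: "is_rep \<rho>"
  shows "ch_Ind d \<rho> t = (1 / of_nat (fact CARD('n))) * (\<Sum>\<sigma> | \<sigma> permutes (UNIV::'n::finite set).
    trace (\<rho> \<sigma>) * (\<Sum>e\<in>{e\<in>mat_exps d. e \<circ> \<sigma> = e}. vec_monom t (col_sums e)))"
proof -
  let ?c = "1 / of_nat (fact CARD('n)) :: complex"
  let ?w = "\<lambda>e. vec_monom t (col_sums e)"
  let ?Perms = "{\<sigma>. \<sigma> permutes (UNIV::'n set)}"
  have diag: "(\<Sum>k\<in>UNIV. reynolds_coeff \<rho> (e, k) (e, k))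
      = ?c * (\<Sum>\<sigma>\<in>?Perms. if e \<circ> \<sigma> = e then trace (\<rho> \<sigma>) else 0)" for e
  proof -
    have "(\<Sum>k\<in>UNIV. reynolds_coeff \<rho> (e, k) (e, k))
        = ?c * (\<Sum>k\<in>UNIV. \<Sum>\<sigma>\<in>?Perms. if e \<circ> \<sigma> = e then \<rho> \<sigma> $ k $ k else 0)"
      by (simp add: reynolds_coeff_def sum_distrib_left cong: if_cong)
    also have "\<dots> = ?c * (\<Sum>\<sigma>\<in>?Perms. if e \<circ> \<sigma> = e then trace (\<rho> \<sigma>) else 0)"
      by (subst sum.swap) (auto simp: trace_def intro!: sum.cong)
    finally show ?thesis .
  qed
  have "ch_Ind d \<rho> t = (\<Sum>e\<in>mat_exps d. (\<Sum>k\<in>UNIV. reynolds_coeff \<rho> (e, k) (e, k)) * ?w e)"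
    by (simp add: ch_Ind_eq_sum_reynolds_coeff[OF rep] sum.cartesian_product case_prod_unfold
        sum_distrib_right)
  also have "\<dots> = ?c * (\<Sum>e\<in>mat_exps d. \<Sum>\<sigma>\<in>?Perms. if e \<circ> \<sigma> = e then trace (\<rho> \<sigma>) * ?w e else 0)"
    unfolding diag sum_distrib_left sum_distrib_right by (auto simp: mult_ac intro!: sum.cong)
  also have "\<dots> = ?c * (\<Sum>\<sigma>\<in>?Perms. \<Sum>e\<in>mat_exps d. if e \<circ> \<sigma> = e then trace (\<rho> \<sigma>) * ?w e else 0)"
    by (subst sum.swap) (rule refl)
  also have "\<dots> = ?c * (\<Sum>\<sigma>\<in>?Perms. trace (\<rho> \<sigma>) * (\<Sum>e\<in>{e\<in>mat_exps d. e \<circ> \<sigma> = e}. ?w e))"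
    by (simp add: sum.inter_filter[OF finite_mat_exps] sum_distrib_left if_distrib[of "(*) _"]
        cong: if_cong)
  finally show ?thesis .
qed

section \<open>Exponent matrices invariant under a permutation\<close>

lemma card_scaled_funs_eq:
  assumes "k > 0"
  shows "card {x::'a::finite \<Rightarrow> nat. (\<lambda>i. k * x i) = y} = (if \<forall>i. k dvd y i then 1 else 0)"
proof (cases "\<forall>i. k dvd y i")
  case True
  have "(\<lambda>i. k * x i) = y \<longleftrightarrow> x = (\<lambda>i. y i div k)" for x
  proof
    assume "(\<lambda>i. k * x i) = y"
    then show "x = (\<lambda>i. y i div k)" using assms by auto
  next
    assume "x = (\<lambda>i. y i div k)"
    then show "(\<lambda>i. k * x i) = y" using True by auto
  qed
  then show ?thesis using True by simp
next
  case False
  then have "{x::'a \<Rightarrow> nat. (\<lambda>i. k * x i) = y} = {}" by (auto simp: fun_eq_iff) (metis dvd_triv_left)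
  then show ?thesis using False by simp
qed

lemma finite_funs_with_sum:
  "finite {a::'a::finite \<Rightarrow> nat. (\<Sum>i\<in>UNIV. a i) = d}"
proof -
  have "a i \<le> (\<Sum>i\<in>UNIV. a i)" for a :: "'a \<Rightarrow> nat" and i by (rule member_le_sum) auto
  then have "{a::'a \<Rightarrow> nat. (\<Sum>i\<in>UNIV. a i) = d} \<subseteq> {a. \<forall>i. a i \<in> {..d}}" by auto
  then show ?thesis by (rule finite_subset) (intro finite_funs_into finite_atMost)
qed

context
  fixes \<sigma> :: "'n::finite \<Rightarrow> 'n"
  assumes \<sigma>: "\<sigma> permutes UNIV"
begin

lemma permutation_\<sigma>: "permutation \<sigma>"
  using \<sigma> by (auto simp: permutation_permutes)

lemma orbit_eq_of_mem_cycles: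
  assumes "c \<in> cycles \<sigma>" "i \<in> c"
  shows "orbit \<sigma> i = c"
  using assms orbit_cyclic_eq3[OF cyclic_on_orbit'[OF permutation_\<sigma>]] unfolding cycles_def by blast

lemma orbit_in_cycles: "orbit \<sigma> i \<in> cycles \<sigma>"
  unfolding cycles_def by blast

lemma card_cycles_pos:
  assumes "c \<in> cycles \<sigma>"
  shows "card c > 0"
proof -
  obtain x where "c = orbit \<sigma> x" using assms unfolding cycles_def by blast
  then show ?thesis using orbit_nonempty[of \<sigma> x] by (simp add: card_gt_0_iff)
qed

lemma sum_over_cycles: "(\<Sum>i\<in>UNIV. g i) = (\<Sum>c\<in>cycles \<sigma>. \<Sum>i\<in>c. g i)"
proof -
  have "\<Union>(cycles \<sigma>) = UNIV"
    using orbit_in_cycles permutation_self_in_orbit[OF permutation_\<sigma>] by blast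
  moreover have "A \<inter> B = {}" if "A \<in> cycles \<sigma>" "B \<in> cycles \<sigma>" "A \<noteq> B" for A B
    using orbit_eq_of_mem_cycles that by blast
  then have "(\<Sum>i\<in>\<Union>(cycles \<sigma>). g i) = (\<Sum>c\<in>cycles \<sigma>. \<Sum>i\<in>c. g i)"
    by (subst sum.Union_disjoint) auto
  ultimately show ?thesis by simp
qed

lemma invariant_const_on_orbit:
  assumes "f \<circ> \<sigma> = f" "y \<in> orbit \<sigma> x"
  shows "f y = f x"
  using assms(2) by induction (use assms(1) in \<open>auto simp: fun_eq_iff\<close>)

text \<open>The index set of the Cauchy product in \<open>p_cycle_type_H \<sigma> a\<close>.\<close>

definition cycle_splittings :: "('n \<Rightarrow> nat) \<Rightarrow> ('n set \<Rightarrow> 'n \<Rightarrow> nat) set" where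
  "cycle_splittings a = {b. (\<forall>c. c \<notin> cycles \<sigma> \<longrightarrow> b c = (\<lambda>_. 0)) \<and> (\<lambda>i. \<Sum>c\<in>cycles \<sigma>. b c i) = a}"

lemma finite_cycle_splittings: "finite (cycle_splittings a)"
proof -
  have "b c i \<le> (\<Sum>i\<in>UNIV. a i)" if "b \<in> cycle_splittings a" for b c i
  proof (cases "c \<in> cycles \<sigma>")
    case True
    have "b c i \<le> (\<Sum>c\<in>cycles \<sigma>. b c i)" using True by (intro member_le_sum) auto
    also have "\<dots> = a i" using that by (auto simp: cycle_splittings_def)
    also have "\<dots> \<le> (\<Sum>i\<in>UNIV. a i)" by (intro member_le_sum) auto
    finally show ?thesis .
  qed (use that in \<open>simp add: cycle_splittings_def\<close>)
  then have "cycle_splittings a \<subseteq> {b. \<forall>c. b c \<in> {f. \<forall>i. f i \<in> {..\<Sum>i\<in>UNIV. a i}}}" by auto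
  then show ?thesis by (rule finite_subset) (intro finite_funs_into finite_atMost)
qed

lemma p_cycle_type_H_eq_card:
  "p_cycle_type_H \<sigma> a = of_nat (card {b\<in>cycle_splittings a. \<forall>c\<in>cycles \<sigma>. \<forall>i. card c dvd b c i})"
proof -
  have prod_eq: "(\<Prod>c\<in>cycles \<sigma>. pk_H (card c) (b c)) = (if \<forall>c\<in>cycles \<sigma>. \<forall>i. card c dvd b c i then 1 else 0)"
    for b :: "'n set \<Rightarrow> 'n \<Rightarrow> nat"
    by (simp add: pk_H_def card_scaled_funs_eq card_cycles_pos prod.neutral)
  have "p_cycle_type_H \<sigma> a
      = (\<Sum>b\<in>cycle_splittings a. if \<forall>c\<in>cycles \<sigma>. \<forall>i. card c dvd b c i then 1 else 0)"
    unfolding p_cycle_type_H_def mps_prod_def cycle_splittings_def by (rule sum.cong[OF refl prod_eq])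
  then show ?thesis by (simp add: sum.inter_filter[OF finite_cycle_splittings, symmetric])
qed

text \<open>A \<open>\<sigma>\<close>-invariant exponent matrix has equal rows along each cycle of \<open>\<sigma>\<close>, so it is recorded
  by its row sums over the cycles, each divisible by the length of the cycle.\<close>

definition cycle_row_sums :: "('n \<Rightarrow> 'n \<Rightarrow> nat) \<Rightarrow> 'n set \<Rightarrow> 'n \<Rightarrow> nat" where
  "cycle_row_sums e c = (if c \<in> cycles \<sigma> then (\<lambda>j. \<Sum>i\<in>c. e i j) else (\<lambda>_. 0))"

definition spread_over_cycles :: "('n set \<Rightarrow> 'n \<Rightarrow> nat) \<Rightarrow> 'n \<Rightarrow> 'n \<Rightarrow> nat" where
  "spread_over_cycles b = (\<lambda>i j. b (orbit \<sigma> i) j div card (orbit \<sigma> i))"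

lemma cycle_row_sums_invariant:
  assumes "e \<circ> \<sigma> = e" "c \<in> cycles \<sigma>" "i \<in> c"
  shows "cycle_row_sums e c j = card c * e i j"
proof -
  have "e i' = e i" if "i' \<in> c" for i'
    using invariant_const_on_orbit[OF assms(1)] orbit_eq_of_mem_cycles[OF assms(2,3)] that by blast
  then show ?thesis using assms(2) by (simp add: cycle_row_sums_def)
qed

lemma cycle_row_sums_in_cycle_splittings:
  assumes "e \<circ> \<sigma> = e"
  shows "cycle_row_sums e \<in> cycle_splittings (col_sums e)"
    and "\<forall>c\<in>cycles \<sigma>. \<forall>j. card c dvd cycle_row_sums e c j"
proof -
  have "(\<Sum>c\<in>cycles \<sigma>. cycle_row_sums e c j) = col_sums e j" for j
    by (simp add: cycle_row_sums_def col_sums_def sum_over_cycles[of "\<lambda>i. e i j"])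
  then show "cycle_row_sums e \<in> cycle_splittings (col_sums e)"
    by (simp add: cycle_splittings_def cycle_row_sums_def fun_eq_iff)
  show "\<forall>c\<in>cycles \<sigma>. \<forall>j. card c dvd cycle_row_sums e c j"
  proof (intro ballI allI)
    fix c j assume c: "c \<in> cycles \<sigma>"
    obtain i where "i \<in> c" using card_cycles_pos[OF c] by (metis card_gt_0_iff ex_in_conv)
    then show "card c dvd cycle_row_sums e c j" using cycle_row_sums_invariant[OF assms c] by simp
  qed
qed

lemma sum_spread_over_cycle:
  assumes "\<forall>c\<in>cycles \<sigma>. \<forall>i. card c dvd b c i" "c \<in> cycles \<sigma>"
  shows "(\<Sum>i\<in>c. spread_over_cycles b i j) = b c j"
  using assms orbit_eq_of_mem_cycles[OF assms(2)] by (simp add: spread_over_cycles_def)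

lemma spread_over_cycles_invariant:
  assumes "b \<in> cycle_splittings a" "\<forall>c\<in>cycles \<sigma>. \<forall>i. card c dvd b c i"
  shows "spread_over_cycles b \<circ> \<sigma> = spread_over_cycles b"
    and "col_sums (spread_over_cycles b) = a"
proof -
  show "spread_over_cycles b \<circ> \<sigma> = spread_over_cycles b"
    by (simp add: spread_over_cycles_def fun_eq_iff permutation_orbit_step[OF permutation_\<sigma>])
  have "col_sums (spread_over_cycles b) j = a j" for j
    using assms sum_spread_over_cycle[OF assms(2)]
    by (simp add: col_sums_def sum_over_cycles[of "\<lambda>i. spread_over_cycles b i j"]
        cycle_splittings_def fun_eq_iff)
  then show "col_sums (spread_over_cycles b) = a" by auto
qed

lemma bij_betw_invariant_exps_cycle_splittings:
  "bij_betw cycle_row_sums {e. e \<circ> \<sigma> = e \<and> col_sums e = a}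
    {b\<in>cycle_splittings a. \<forall>c\<in>cycles \<sigma>. \<forall>i. card c dvd b c i}"
proof (rule bij_betw_byWitness[where f'=spread_over_cycles])
  show "\<forall>e\<in>{e. e \<circ> \<sigma> = e \<and> col_sums e = a}. spread_over_cycles (cycle_row_sums e) = e"
    using cycle_row_sums_invariant[OF _ orbit_in_cycles permutation_self_in_orbit[OF permutation_\<sigma>]]
      card_cycles_pos[OF orbit_in_cycles]
    by (simp add: spread_over_cycles_def fun_eq_iff)
  show "\<forall>b\<in>{b\<in>cycle_splittings a. \<forall>c\<in>cycles \<sigma>. \<forall>i. card c dvd b c i}.
      cycle_row_sums (spread_over_cycles b) = b"
    using sum_spread_over_cycle by (auto simp: cycle_row_sums_def cycle_splittings_def fun_eq_iff)
qed (use cycle_row_sums_in_cycle_splittings spread_over_cycles_invariant in auto)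

lemma card_invariant_exps:
  "of_nat (card {e. e \<circ> \<sigma> = e \<and> col_sums e = a}) = p_cycle_type_H \<sigma> a"
  using bij_betw_same_card[OF bij_betw_invariant_exps_cycle_splittings] p_cycle_type_H_eq_card
  by simp

lemma sum_invariant_exps:
  "(\<Sum>e\<in>{e\<in>mat_exps d. e \<circ> \<sigma> = e}. vec_monom t (col_sums e))
    = (\<Sum>a | (\<Sum>i\<in>UNIV. a i) = d. p_cycle_type_H \<sigma> a * vec_monom t a)"
proof -
  let ?A = "{a::'n \<Rightarrow> nat. (\<Sum>i\<in>UNIV. a i) = d}"
  let ?F = "{e\<in>mat_exps d. e \<circ> \<sigma> = e}"
  have degree: "col_sums e \<in> ?A \<longleftrightarrow> e \<in> mat_exps d" for e
    unfolding col_sums_def mat_exps_def by (subst sum.swap) simp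
  have "(\<Sum>e\<in>?F. vec_monom t (col_sums e))
      = (\<Sum>a\<in>?A. \<Sum>e\<in>{e\<in>?F. col_sums e = a}. vec_monom t (col_sums e))"
    using degree by (intro sum.group[symmetric] finite_funs_with_sum) (auto intro: finite_subset[OF _ finite_mat_exps])
  also have "\<dots> = (\<Sum>a\<in>?A. of_nat (card {e. e \<circ> \<sigma> = e \<and> col_sums e = a}) * vec_monom t a)"
  proof (intro sum.cong refl)
    fix a assume "a \<in> ?A"
    then have "{e\<in>?F. col_sums e = a} = {e. e \<circ> \<sigma> = e \<and> col_sums e = a}" using degree by auto
    then show "(\<Sum>e\<in>{e\<in>?F. col_sums e = a}. vec_monom t (col_sums e))
        = of_nat (card {e. e \<circ> \<sigma> = e \<and> col_sums e = a}) * vec_monom t a" by simp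
  qed
  finally show ?thesis by (simp add: card_invariant_exps)
qed

end

theorem theorem8:
  fixes \<rho> :: "('n::finite \<Rightarrow> 'n) \<Rightarrow> complex^'m::finite^'m"
  assumes "is_rep \<rho>"
  shows "\<forall>d t. (\<forall>i. t $ i \<noteq> 0) \<longrightarrow>
    ch_Ind d \<rho> t = (\<Sum>a\<in>{a::'n \<Rightarrow> nat. (\<Sum>i\<in>UNIV. a i) = d}. Frob_pleth_H \<rho> a * (\<Prod>i\<in>UNIV. (t $ i) ^ a i))"
proof (intro allI impI)
  \<comment> \<open>The identity holds for every \<open>t\<close>.\<close>
  fix d and t :: "complex^'n"
  let ?A = "{a::'n \<Rightarrow> nat. (\<Sum>i\<in>UNIV. a i) = d}"
  let ?Perms = "{\<sigma>. \<sigma> permutes (UNIV::'n set)}"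
  let ?c = "1 / of_nat (fact CARD('n)) :: complex"
  have "ch_Ind d \<rho> t
      = ?c * (\<Sum>\<sigma>\<in>?Perms. trace (\<rho> \<sigma>) * (\<Sum>a\<in>?A. p_cycle_type_H \<sigma> a * vec_monom t a))"
    unfolding ch_Ind_eq_sum_invariant_exps[OF assms] by (intro arg_cong[where f="(*) ?c"] sum.cong)
      (simp_all add: sum_invariant_exps)
  also have "\<dots> = ?c * (\<Sum>a\<in>?A. \<Sum>\<sigma>\<in>?Perms. trace (\<rho> \<sigma>) * p_cycle_type_H \<sigma> a * vec_monom t a)"
    by (subst sum.swap) (simp add: sum_distrib_left mult.assoc)
  also have "\<dots> = (\<Sum>a\<in>?A. Frob_pleth_H \<rho> a * vec_monom t a)"
    by (simp add: Frob_pleth_H_def character_def sum_distrib_left sum_distrib_right mult.assoc)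
  finally show "ch_Ind d \<rho> t = (\<Sum>a\<in>?A. Frob_pleth_H \<rho> a * (\<Prod>i\<in>UNIV. (t $ i) ^ a i))"
    by (simp add: vec_monom_def)
qed

end
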